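(* Let $\mathcal M'=\bigcup_{K=1}^{\min(M+1,N)}\mathcal F_K^{\mathrm{in}}\times \mathcal Q_K^{\mathrm{an}}$. Then $\mathcal M'$ is identifiable: for all $(F^1,Q^1),(F^2,Q^2)\in\mathcal M'$, $F^1Q^1=F^2Q^2$ implies $(F^1,Q^1)\sim(F^2,Q^2)$.
   Context: Fix positive integers $M$ and $N$. For a positive integer $K$, $\mathcal F_K$ is the set of real $M\times K$ matrices with all entries in $[0,1]$, and $\mathcal Q_K$ is the set of real $K\times N$ matrices with entries in $[0,1]$ each of whose columns sums to $1$. $e_k$ denotes the $k$-th standard basis vector, and $A_{\star j}$ denotes the $j$-th column of a matrix $A$. $\mathcal Q_K^{\mathrm{an}}$ is the set of $Q\in\mathcal Q_K$ such that for every $k\in\{1,\dots,K\}$ there is $i\in\{1,\dots,N\}$ with $Q_{\star i}=e_k$. $\mathcal F_K^{\mathrm{in}}$ is the set of $F\in\mathcal F_K$ such that the vectors $F_{\star 1}-F_{\star K},\dots,F_{\star K-1}-F_{\star K}$ are linearly independent (a vacuous condition when $K=1$). Two pairs are equivalent, $(F^1,Q^1)\sim(F^2,Q^2)$, if $F^1,F^2$ have the same number $K$ of columns and there is a permutation $\pi$ of $\{1,\dots,K\}$ with $F^2_{sk}=F^1_{s\pi(k)}$ and $Q^2_{ki}=Q^1_{\pi(k)i}$ for all $s,k,i$. A set $\mathcal M\subseteq\bigcup_{K\ge1}\mathcal F_K\times\mathcal Q_K$ is called identifiable if for all $(F^1,Q^1),(F^2,Q^2)\in\mathcal M$, $F^1Q^1=F^2Q^2$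 implies $(F^1,Q^1)\sim(F^2,Q^2)$. *)

theory Defs
  imports Complex_Main
begin

text \<open>Matrices of varying size are represented as functions nat => nat => real,
  with explicit index bounds: an M x K matrix F has entries F s k for s < M, k < K
  (indices are 0-based). Entries outside the bounds are irrelevant.\<close>

definition F_set :: "nat \<Rightarrow> nat \<Rightarrow> (nat \<Rightarrow> nat \<Rightarrow> real) \<Rightarrow> bool" where
  "F_set M K F \<longleftrightarrow> (\<forall>s<M. \<forall>k<K. 0 \<le> F s k \<and> F s k \<le> 1)"

definition Q_set :: "nat \<Rightarrow> nat \<Rightarrow> (nat \<Rightarrow> nat \<Rightarrow> real) \<Rightarrow> bool" where
  "Q_set K N Q \<longleftrightarrow> (\<forall>k<K. \<forall>i<N. 0 \<le> Q k i \<and> Q k i \<le> 1)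
                    \<and> (\<forall>i<N. (\<Sum>k<K. Q k i) = 1)"

definition Q_an :: "nat \<Rightarrow> nat \<Rightarrow> (nat \<Rightarrow> nat \<Rightarrow> real) \<Rightarrow> bool" where
  "Q_an K N Q \<longleftrightarrow> Q_set K N Q \<and>
     (\<forall>k<K. \<exists>i<N. \<forall>k'<K. Q k' i = (if k' = k then 1 else 0))"

text \<open>F in F_K^in: the family of columns F_k - F_K (k = 1..K-1, here 0..K-2 minus
  column K-1) is linearly independent in R^M.\<close>
definition F_in :: "nat \<Rightarrow> nat \<Rightarrow> (nat \<Rightarrow> nat \<Rightarrow> real) \<Rightarrow> bool" where
  "F_in M K F \<longleftrightarrow> F_set M K F \<and>
     (\<forall>c :: nat \<Rightarrow> real.
        (\<forall>s<M. (\<Sum>k<K - 1. c k * (F s k - F s (K - 1))) = 0) \<longrightarrow> (\<forall>k<K - 1. c k = 0))"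

definition mat_prod :: "nat \<Rightarrow> (nat \<Rightarrow> nat \<Rightarrow> real) \<Rightarrow> (nat \<Rightarrow> nat \<Rightarrow> real) \<Rightarrow> nat \<Rightarrow> nat \<Rightarrow> real" where
  "mat_prod K F Q s i = (\<Sum>k<K. F s k * Q k i)"

definition pair_equiv :: "nat \<Rightarrow> nat \<Rightarrow> nat \<times> (nat \<Rightarrow> nat \<Rightarrow> real) \<times> (nat \<Rightarrow> nat \<Rightarrow> real)
     \<Rightarrow> nat \<times> (nat \<Rightarrow> nat \<Rightarrow> real) \<times> (nat \<Rightarrow> nat \<Rightarrow> real) \<Rightarrow> bool" where
  "pair_equiv M N P1 P2 \<longleftrightarrow> (case P1 of (K1, F1, Q1) \<Rightarrow> case P2 of (K2, F2, Q2) \<Rightarrow>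
     K1 = K2 \<and> (\<exists>\<pi>. bij_betw \<pi> {..<K1} {..<K1} \<and>
        (\<forall>s<M. \<forall>k<K1. F2 s k = F1 s (\<pi> k)) \<and>
        (\<forall>k<K1. \<forall>i<N. Q2 k i = Q1 (\<pi> k) i)))"

definition model' :: "nat \<Rightarrow> nat \<Rightarrow> (nat \<times> (nat \<Rightarrow> nat \<Rightarrow> real) \<times> (nat \<Rightarrow> nat \<Rightarrow> real)) set" where
  "model' M N = {(K, F, Q). 1 \<le> K \<and> K \<le> min (M + 1) N \<and> F_in M K F \<and> Q_an K N Q}"

definition identifiable :: "nat \<Rightarrow> nat \<Rightarrow> (nat \<times> (nat \<Rightarrow> nat \<Rightarrow> real) \<times> (nat \<Rightarrow> nat \<Rightarrow> real)) set \<Rightarrow> bool" where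
  "identifiable M N \<M> \<longleftrightarrow> (\<forall>(K1, F1, Q1) \<in> \<M>. \<forall>(K2, F2, Q2) \<in> \<M>.
     (\<forall>s<M. \<forall>i<N. mat_prod K1 F1 Q1 s i = mat_prod K2 F2 Q2 s i)
       \<longrightarrow> pair_equiv M N (K1, F1, Q1) (K2, F2, Q2))"

end

theory Submission
  imports Defs
begin

text \<open>Affine independence of the columns of F makes affine combinations of them unique.
  Since Q has the unit columns e_k, every column of F is a column of X = F Q, and every
  column of X is a convex combination of the columns of F. So if F1 Q1 = F2 Q2, a column of
  F1 is a convex combination of columns of F2, each a convex combination of columns of F1;
  uniqueness forces the composite combination to be trivial, so some column of F2 equals
  the given column of F1. The resulting injections in both directions give a permutation
  matching F1 with F2, and uniqueness of affine coefficients then matches Q1 with Q2.\<close>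

lemma F_in_affine_coeffs_unique:
  assumes "F_in M K F"
    and F_eq: "\<forall>s<M. (\<Sum>j<K. F s j * c j) = (\<Sum>j<K. F s j * d j)"
    and sum_eq: "(\<Sum>j<K. c j) = (\<Sum>j<K. d j)"
  shows "\<forall>j<K. c j = d j"
proof (cases K)
  case (Suc K')
  define e where "e j = c j - d j" for j
  have e_last: "e K' = - (\<Sum>j<K'. e j)"
    using sum_eq by (simp add: e_def sum_subtractf Suc)
  have "(\<Sum>j<K - 1. e j * (F s j - F s (K - 1))) = 0" if "s < M" for s
  proof -
    have "(\<Sum>j<K - 1. e j * (F s j - F s (K - 1)))
        = (\<Sum>j<K'. F s j * e j) - (\<Sum>j<K'. e j) * F s K'"
      by (simp add: Suc algebra_simps sum_subtractf sum_distrib_left)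
    also have "\<dots> = (\<Sum>j<K. F s j * e j)"
      using e_last by (simp add: Suc)
    also have "\<dots> = 0"
      using F_eq that by (simp add: e_def right_diff_distrib sum_subtractf)
    finally show ?thesis .
  qed
  then have "\<forall>j<K'. e j = 0"
    using assms(1) by (simp add: F_in_def Suc)
  with e_last have "\<forall>j<K. e j = 0"
    by (simp add: Suc less_Suc_eq)
  then show ?thesis by (simp add: e_def)
qed simp

lemma sum_mult_delta:
  "k < (K :: nat) \<Longrightarrow> (\<Sum>j<K. f j * (if j = k then 1 else 0)) = (f k :: 'a :: semiring_1)"
  by (simp add: if_distrib cong: if_cong)

lemma F_in_columns_distinct:
  assumes "F_in M K F" "j < K" "k < K" "\<forall>s<M. F s j = F s k"
  shows "j = k"
proof -
  have "\<forall>i<K. (if i = j then 1 else 0 :: real) = (if i = k then 1 else 0)"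
    by (rule F_in_affine_coeffs_unique[OF assms(1)]) (use assms(2-4) in \<open>simp_all add: sum_mult_delta\<close>)
  then show ?thesis using assms(2) by (metis zero_neq_one)
qed

lemma mat_prod_assoc:
  "mat_prod K2 (mat_prod K1 F R) Q s i = mat_prod K1 F (mat_prod K2 R Q) s i"
  unfolding mat_prod_def
  by (simp add: sum_distrib_left sum_distrib_right mult.assoc) (rule sum.swap)

lemma sum_mat_prod_column:
  "(\<Sum>j<K1. mat_prod K2 R Q j i) = (\<Sum>l<K2. (\<Sum>j<K1. R j l) * Q l i)"
  unfolding mat_prod_def by (simp add: sum_distrib_right) (rule sum.swap)

lemma mat_prod_unit_column:
  assumes "k < K" "\<forall>j<K. Q j i = (if j = k then 1 else 0)"
  shows "mat_prod K F Q s i = F s k"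
proof -
  have "mat_prod K F Q s i = (\<Sum>j<K. F s j * (if j = k then 1 else 0))"
    unfolding mat_prod_def using assms(2) by (intro sum.cong) auto
  then show ?thesis using assms(1) by (simp add: sum_mult_delta)
qed

lemma Q_an_column_of_product:
  assumes "Q_an K N Q" "k < K"
  shows "\<exists>i<N. \<forall>s. mat_prod K F Q s i = F s k"
  using assms mat_prod_unit_column unfolding Q_an_def by meson

lemma Q_set_column_sum: "Q_set K N Q \<Longrightarrow> i < N \<Longrightarrow> (\<Sum>k<K. Q k i) = 1"
  by (simp add: Q_set_def)

lemma Q_set_unit_column:
  assumes Q: "Q_set K N Q" and "i < N" "k < K" "Q k i = 1"
  shows "\<forall>j<K. Q j i = (if j = k then 1 else 0)"
proof -
  have "(\<Sum>j\<in>{..<K} - {k}. Q j i) = 0"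
    using Q_set_column_sum[OF Q] assms(2-4) by (simp add: sum_diff1)
  moreover have "\<forall>j\<in>{..<K} - {k}. 0 \<le> Q j i"
    using Q assms(2) by (simp add: Q_set_def)
  ultimately have "\<forall>j\<in>{..<K} - {k}. Q j i = 0"
    using sum_nonneg_eq_0_iff[of "{..<K} - {k}" "\<lambda>j. Q j i"] by simp
  then show ?thesis using assms(4) by auto
qed

lemma convex_combination_eq_one:
  fixes w x :: "'a \<Rightarrow> real"
  assumes "finite A" "\<forall>l\<in>A. 0 \<le> w l" "sum w A = 1" "\<forall>l\<in>A. x l \<le> 1"
    and "(\<Sum>l\<in>A. x l * w l) = 1"
  shows "\<exists>l\<in>A. x l = 1"
proof -
  have "(\<Sum>l\<in>A. w l * (1 - x l)) = 0"
    using assms(3,5) by (simp add: algebra_simps sum_subtractf)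
  moreover have "\<forall>l\<in>A. 0 \<le> w l * (1 - x l)"
    using assms(2,4) by simp
  ultimately have "\<forall>l\<in>A. w l * (1 - x l) = 0"
    using assms(1) by (simp add: sum_nonneg_eq_0_iff)
  moreover obtain l where "l \<in> A" "w l \<noteq> 0"
    using assms(3) by (metis sum.neutral zero_neq_one)
  ultimately show ?thesis by auto
qed

lemma column_occurs_in_other_factorization:
  assumes F1: "F_in M K1 F1" and Q1: "Q_an K1 N Q1" and Q2: "Q_an K2 N Q2"
    and X_eq: "\<forall>s<M. \<forall>i<N. mat_prod K1 F1 Q1 s i = mat_prod K2 F2 Q2 s i"
    and k: "k < K1"
  shows "\<exists>l<K2. \<forall>s<M. F2 s l = F1 s k"
proof -
  have Q1s: "Q_set K1 N Q1" and Q2s: "Q_set K2 N Q2"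
    using Q1 Q2 by (simp_all add: Q_an_def)
  obtain i where i: "i < N" "\<And>s. mat_prod K1 F1 Q1 s i = F1 s k"
    using Q_an_column_of_product[OF Q1 k] by blast
  have "\<forall>l. \<exists>i. l < K2 \<longrightarrow> i < N \<and> (\<forall>s. mat_prod K2 F2 Q2 s i = F2 s l)"
    using Q_an_column_of_product[OF Q2] by blast
  then obtain g where g: "\<And>l. l < K2 \<Longrightarrow> g l < N \<and> (\<forall>s. mat_prod K2 F2 Q2 s (g l) = F2 s l)"
    by metis
  define R where "R j l = Q1 j (g l)" for j l
  have F2_eq: "F2 s l = mat_prod K1 F1 R s l" if "s < M" "l < K2" for s l
  proof -
    have "F2 s l = mat_prod K1 F1 Q1 s (g l)"
      using g[OF that(2)] X_eq that(1) by simp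
    then show ?thesis by (simp add: R_def mat_prod_def)
  qed
  have "F1 s k = mat_prod K1 F1 (mat_prod K2 R Q2) s i" if "s < M" for s
  proof -
    have "F1 s k = mat_prod K1 F1 Q1 s i" using i(2) by simp
    also have "\<dots> = mat_prod K2 F2 Q2 s i" using X_eq that i(1) by simp
    also have "\<dots> = mat_prod K2 (mat_prod K1 F1 R) Q2 s i"
      using F2_eq that by (simp add: mat_prod_def)
    finally show ?thesis by (simp add: mat_prod_assoc)
  qed
  moreover have "(\<Sum>j<K1. mat_prod K2 R Q2 j i) = 1"
    using Q_set_column_sum[OF Q1s] Q_set_column_sum[OF Q2s i(1)] g
    by (simp add: sum_mat_prod_column R_def)
  ultimately have "\<forall>j<K1. mat_prod K2 R Q2 j i = (if j = k then 1 else 0)"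
    by (intro F_in_affine_coeffs_unique[OF F1]) (use k in \<open>simp_all add: mat_prod_def sum_mult_delta\<close>)
  then have "(\<Sum>l<K2. Q1 k (g l) * Q2 l i) = 1"
    using k by (simp add: mat_prod_def R_def)
  moreover have "\<forall>l<K2. Q1 k (g l) \<le> 1"
    using Q1s g k by (simp add: Q_set_def)
  ultimately obtain l where l: "l < K2" "Q1 k (g l) = 1"
    using convex_combination_eq_one[of "{..<K2}" "\<lambda>l. Q2 l i" "\<lambda>l. Q1 k (g l)"]
      Q2s Q_set_column_sum[OF Q2s i(1)] i(1) by (auto simp: Q_set_def)
  have "\<forall>j<K1. Q1 j (g l) = (if j = k then 1 else 0)"
    using Q_set_unit_column[OF Q1s _ k l(2)] g l(1) by blast
  then have "\<forall>s<M. F2 s l = F1 s k"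
    using F2_eq[OF _ l(1)] mat_prod_unit_column[OF k] by (simp add: R_def)
  then show ?thesis using l(1) by blast
qed

lemma column_embedding:
  assumes F1: "F_in M K1 F1" and "Q_an K1 N Q1" "Q_an K2 N Q2"
    and "\<forall>s<M. \<forall>i<N. mat_prod K1 F1 Q1 s i = mat_prod K2 F2 Q2 s i"
  obtains p where "inj_on p {..<K1}" "p ` {..<K1} \<subseteq> {..<K2}"
    and "\<And>k s. k < K1 \<Longrightarrow> s < M \<Longrightarrow> F2 s (p k) = F1 s k"
proof -
  obtain p where p: "\<And>k. k < K1 \<Longrightarrow> p k < K2 \<and> (\<forall>s<M. F2 s (p k) = F1 s k)"
    using column_occurs_in_other_factorization[OF assms] by metis
  have "inj_on p {..<K1}"
  proof (rule inj_onI)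
    fix j k assume "j \<in> {..<K1}" "k \<in> {..<K1}" "p j = p k"
    then show "j = k"
      using F_in_columns_distinct[OF F1] p by (metis lessThan_iff)
  qed
  then show ?thesis using that p by blast
qed

lemma Q_eq_of_column_permutation:
  assumes F2: "F_in M K F2" and Q1: "Q_set K N Q1" and Q2: "Q_set K N Q2"
    and p: "bij_betw p {..<K} {..<K}" and F_perm: "\<And>l s. l < K \<Longrightarrow> s < M \<Longrightarrow> F1 s (p l) = F2 s l"
    and X_eq: "\<forall>s<M. \<forall>i<N. mat_prod K F1 Q1 s i = mat_prod K F2 Q2 s i"
    and i: "i < N"
  shows "\<forall>l<K. Q2 l i = Q1 (p l) i"
proof (rule F_in_affine_coeffs_unique[OF F2])
  show "\<forall>s<M. (\<Sum>l<K. F2 s l * Q2 l i) = (\<Sum>l<K. F2 s l * Q1 (p l) i)"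
  proof (intro allI impI)
    fix s assume s: "s < M"
    have "(\<Sum>l<K. F2 s l * Q2 l i) = mat_prod K F1 Q1 s i"
      using X_eq s i by (simp add: mat_prod_def)
    also have "\<dots> = (\<Sum>l<K. F1 s (p l) * Q1 (p l) i)"
      unfolding mat_prod_def using sum.reindex_bij_betw[OF p, of "\<lambda>k. F1 s k * Q1 k i"] by simp
    finally show "(\<Sum>l<K. F2 s l * Q2 l i) = (\<Sum>l<K. F2 s l * Q1 (p l) i)"
      using F_perm s by simp
  qed
  show "(\<Sum>l<K. Q2 l i) = (\<Sum>l<K. Q1 (p l) i)"
    using Q_set_column_sum[OF Q1 i] Q_set_column_sum[OF Q2 i]
      sum.reindex_bij_betw[OF p, of "\<lambda>k. Q1 k i"] by simp
qed

theorem mainTheorem1: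
  fixes M N :: nat
  assumes "0 < M" and "0 < N"
  shows "identifiable M N (model' M N)"
  unfolding identifiable_def
proof (clarify)
  fix K1 F1 Q1 K2 F2 Q2
  assume "(K1, F1, Q1) \<in> model' M N" "(K2, F2, Q2) \<in> model' M N"
  then have F: "F_in M K1 F1" "F_in M K2 F2" and Q: "Q_an K1 N Q1" "Q_an K2 N Q2"
    by (simp_all add: model'_def)
  assume X_eq: "\<forall>s<M. \<forall>i<N. mat_prod K1 F1 Q1 s i = mat_prod K2 F2 Q2 s i"
  then have X_eq': "\<forall>s<M. \<forall>i<N. mat_prod K2 F2 Q2 s i = mat_prod K1 F1 Q1 s i"
    by simp
  obtain p' where "inj_on p' {..<K1}" "p' ` {..<K1} \<subseteq> {..<K2}"
    by (rule column_embedding[OF F(1) Q X_eq]) (rule that)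
  then have "K1 \<le> K2"
    using card_inj_on_le[of p' "{..<K1}" "{..<K2}"] by simp
  obtain p where p_inj: "inj_on p {..<K2}" and p_into: "p ` {..<K2} \<subseteq> {..<K1}"
    and F_perm: "\<And>k s. k < K2 \<Longrightarrow> s < M \<Longrightarrow> F1 s (p k) = F2 s k"
    by (rule column_embedding[OF F(2) Q(2,1) X_eq']) (rule that)
  have K: "K1 = K2"
    using card_inj_on_le[OF p_inj p_into] \<open>K1 \<le> K2\<close> by simp
  have p: "bij_betw p {..<K2} {..<K2}"
    using p_inj p_into K by (simp add: bij_betw_def endo_inj_surj)
  have "Q_set K2 N Q1" "Q_set K2 N Q2"
    using Q K by (simp_all add: Q_an_def)
  then have Q_perm: "\<forall>l<K2. Q2 l i = Q1 (p l) i" if "i < N" for i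
    using Q_eq_of_column_permutation[OF F(2) _ _ p F_perm X_eq[unfolded K] that] by blast
  show "pair_equiv M N (K1, F1, Q1) (K2, F2, Q2)"
    unfolding pair_equiv_def using K p F_perm Q_perm by auto
qed

end
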